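(* Let $\gamma\in(1,3)$, $\mu\in(0,1)$, $K>0$, and $U_C=\frac{2\mu}{\gamma+1}$. Define $U^{\mathrm{sp}}=U^{\mathrm{sp}}(y)$ for $0<y<\infty$ by the implicit formula \[ y=K\frac{\big(\frac{2\mu}{\gamma+1}-U^{\mathrm{sp}}\big)^{\frac1\mu-1}}{(-U^{\mathrm{sp}})^{\frac1\mu}},\qquad 0<y<\infty,\ U^{\mathrm{sp}}<0. \] Then $U^{\mathrm{sp}}$ solves \[ y\frac{dU}{dy}=-\frac{[(\gamma+1)U-2\mu]U}{(\gamma+1)U-2}, \] satisfies $-\infty<U^{\mathrm{sp}}<0$ and $\lim_{y\to\infty}U^{\mathrm{sp}}(y)=0$. Moreover, \[ U^{\mathrm{sp}}(y)=-K^\mu U_C^{1-\mu}\frac{1}{y^\mu}+o\Big(\frac1{y^\mu}\Big)\ \text{ as }y\to\infty,\qquad U^{\mathrm{sp}}(y)=-\frac{K}{y}+o\Big(\frac1y\Big)\ \text{ as }y\to0^+. \] *)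

theory Defs
  imports "HOL-Analysis.Analysis" "HOL-Library.Landau_Symbols"
begin

definition U_C :: "real \<Rightarrow> real \<Rightarrow> real" where
  "U_C gamma mu = 2 * mu / (gamma + 1)"

definition Usp_implicit :: "real \<Rightarrow> real \<Rightarrow> real \<Rightarrow> real \<Rightarrow> real" where
  "Usp_implicit gamma mu K U =
     K * (U_C gamma mu - U) powr (1 / mu - 1) / (- U) powr (1 / mu)"

definition Usp :: "real \<Rightarrow> real \<Rightarrow> real \<Rightarrow> real \<Rightarrow> real" where
  "Usp gamma mu K y = (THE U. U < 0 \<and> y = Usp_implicit gamma mu K U)"

end

theory Submission
  imports Defs "HOL-Real_Asymp.Real_Asymp" "HOL-Complex_Analysis.Conformal_Mappings"
begin

text \<open>Write F for \<open>Usp_implicit gamma mu K\<close>. Its logarithmic derivative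
  \<open>(U_C - mu U) / (mu (-U) (U_C - U))\<close> is positive for \<open>U < 0\<close>, and F tends to 0 at \<open>-\<infinity>\<close>
  and to \<open>\<infinity>\<close> at \<open>0\<^sup>-\<close>; so F is an increasing bijection from \<open>(-\<infinity>, 0)\<close> onto \<open>(0, \<infinity>)\<close>
  and \<open>Usp\<close> is its inverse. The ODE is the inverse function rule, rewritten using
  \<open>U_C (gamma + 1) = 2 mu\<close>. The expansions come from \<open>(-U) F(U) \<rightarrow> K\<close> as \<open>U \<rightarrow> -\<infinity>\<close> and
  \<open>(-U) F(U) powr mu \<rightarrow> K powr mu * U_C powr (1 - mu)\<close> as \<open>U \<rightarrow> 0\<^sup>-\<close>, composed with
  \<open>Usp\<close>, which sends \<open>y \<rightarrow> 0\<^sup>+\<close> to \<open>-\<infinity>\<close> and \<open>y \<rightarrow> \<infinity>\<close> to \<open>0\<^sup>-\<close>.\<close>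

lemma has_real_derivative_powr_quotient:
  fixes K c a b U :: real
  assumes "U < 0" "U < c"
  shows "((\<lambda>U. K * (c - U) powr a / (-U) powr b) has_real_derivative
           K * (c - U) powr a / (-U) powr b * (b / (-U) - a / (c - U))) (at U)"
proof -
  have powr_pred: "(c - U) powr (a - 1) = (c - U) powr a / (c - U)"
      "(-U) powr (b - 1) = (-U) powr b / (-U)"
    using assms by (simp_all add: powr_diff)
  show ?thesis
    using assms by (auto intro!: derivative_eq_intros simp: powr_pred field_simps)
qed

lemma smallo_of_tendsto_mult:
  fixes u w :: "'a \<Rightarrow> real"
  assumes "((\<lambda>x. w x * u x) \<longlongrightarrow> L) F" "eventually (\<lambda>x. w x \<noteq> 0) F"
  shows "(\<lambda>x. u x - L / w x) \<in> o[F](\<lambda>x. 1 / w x)"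
proof (rule smalloI_tendsto)
  have "((\<lambda>x. w x * u x - L) \<longlongrightarrow> 0) F"
    using tendsto_diff[OF assms(1) tendsto_const[of L]] by simp
  moreover have "eventually (\<lambda>x. w x * u x - L = (u x - L / w x) / (1 / w x)) F"
    using assms(2) by eventually_elim (simp add: field_simps)
  ultimately show "((\<lambda>x. (u x - L / w x) / (1 / w x)) \<longlongrightarrow> 0) F"
    by (rule Lim_transform_eventually)
  show "eventually (\<lambda>x. 1 / w x \<noteq> 0) F"
    using assms(2) by eventually_elim simp
qed

lemma ex1_neg_preimage:
  fixes f :: "real \<Rightarrow> real"
  assumes mono: "strict_mono_on {..<0} f" and cont: "continuous_on {..<0} f"
    and bot: "(f \<longlongrightarrow> 0) at_bot" and top: "filterlim f at_top (at_left 0)"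
    and "0 < y"
  shows "\<exists>!U. U < 0 \<and> y = f U"
proof -
  have "eventually (\<lambda>U. f U < y) at_bot"
    using bot \<open>0 < y\<close> by (rule order_tendstoD)
  then obtain N where N: "\<And>U. U \<le> N \<Longrightarrow> f U < y"
    by (auto simp: eventually_at_bot_linorder)
  define U1 where "U1 = min N (-1)"
  have U1: "U1 < 0" "f U1 < y"
    using N by (auto simp: U1_def)
  have "eventually (\<lambda>U. y < f U \<and> U \<in> {U1<..<0}) (at_left 0)"
  proof (rule eventually_conj)
    show "eventually (\<lambda>U. y < f U) (at_left 0)"
      using top by (simp add: filterlim_at_top_dense)
    show "eventually (\<lambda>U. U \<in> {U1<..<0}) (at_left 0)"
      using \<open>U1 < 0\<close> by (rule eventually_at_left_real)
  qed
  then obtain U2 where U2: "y < f U2" "U1 < U2" "U2 < 0"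
    using eventually_happens'[OF trivial_limit_at_left_real] by auto
  have "continuous_on {U1..U2} f"
    by (rule continuous_on_subset[OF cont]) (use U2 in auto)
  then obtain U where "U1 \<le> U" "U \<le> U2" "f U = y"
    using IVT'[of f U1 y U2] U1 U2 by auto
  with U2 have "U < 0 \<and> y = f U"
    by simp
  moreover have "inj_on f {..<0}"
    using mono by (rule strict_mono_on_imp_inj_on)
  ultimately show ?thesis
    unfolding inj_on_def by blast
qed

lemma filterlim_inverse_at_top_at_left_0:
  fixes f g :: "real \<Rightarrow> real"
  assumes mono: "strict_mono_on {..<0} f"
    and inv: "\<And>y. 0 < y \<Longrightarrow> g y < 0 \<and> f (g y) = y"
  shows "filterlim g (at_left 0) at_top"
proof (rule tendsto_imp_filterlim_at_left)
  show "(g \<longlongrightarrow> 0) at_top"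
  proof (rule order_tendstoI)
    fix a :: real
    assume "a < 0"
    show "eventually (\<lambda>y. a < g y) at_top"
      using eventually_gt_at_top[of "max 0 (f a)"]
    proof eventually_elim
      case (elim y)
      then have "\<not> g y \<le> a"
        using inv[of y] strict_mono_on_leD[OF mono, of "g y" a] \<open>a < 0\<close> by force
      then show ?case
        by simp
    qed
  next
    fix a :: real
    assume "0 < a"
    show "eventually (\<lambda>y. g y < a) at_top"
      using eventually_gt_at_top[of 0] by eventually_elim (use inv \<open>0 < a\<close> in force)
  qed
  show "eventually (\<lambda>y. g y < 0) at_top"
    using eventually_gt_at_top[of 0] by eventually_elim (use inv in blast)
qed

lemma filterlim_inverse_at_right_0_at_bot:
  fixes f g :: "real \<Rightarrow> real"
  assumes mono: "strict_mono_on {..<0} f" and pos: "\<And>U. U < 0 \<Longrightarrow> 0 < f U"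
    and inv: "\<And>y. 0 < y \<Longrightarrow> g y < 0 \<and> f (g y) = y"
  shows "filterlim g at_bot (at_right 0)"
  unfolding filterlim_at_bot
proof
  fix Z :: real
  define Z' where "Z' = min Z (-1)"
  have Z': "Z' < 0" "Z' \<le> Z"
    by (auto simp: Z'_def)
  show "eventually (\<lambda>y. g y \<le> Z) (at_right 0)"
    using eventually_at_right_real[OF pos[OF \<open>Z' < 0\<close>]]
  proof eventually_elim
    case (elim y)
    then have "\<not> Z' < g y"
      using inv[of y] strict_mono_onD[OF mono, of Z' "g y"] \<open>Z' < 0\<close> by force
    then show ?case
      using Z' by simp
  qed
qed

locale Usp_parameters =
  fixes gamma mu K :: real
  assumes gamma_gt: "-1 < gamma" and mu_pos: "0 < mu" and mu_le_1: "mu \<le> 1" and K_pos: "0 < K"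
begin

lemma U_C_pos: "0 < U_C gamma mu"
  using gamma_gt mu_pos by (simp add: U_C_def)

lemma Usp_implicit_pos: "U < 0 \<Longrightarrow> 0 < Usp_implicit gamma mu K U"
  using U_C_pos K_pos by (simp add: Usp_implicit_def)

lemma U_C_minus_mult_pos:
  assumes "U < 0"
  shows "0 < U_C gamma mu - mu * U"
  using mult_pos_neg[OF mu_pos assms] U_C_pos by linarith

lemma Usp_implicit_log_deriv_pos:
  assumes "U < 0"
  shows "0 < (U_C gamma mu - mu * U) / (mu * (-U) * (U_C gamma mu - U))"
  using assms U_C_pos mu_pos U_C_minus_mult_pos[OF assms]
  by (intro divide_pos_pos mult_pos_pos) auto

lemma Usp_implicit_has_real_derivative:
  assumes "U < 0"
  shows "(Usp_implicit gamma mu K has_real_derivative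
           Usp_implicit gamma mu K U * ((U_C gamma mu - mu * U) / (mu * (-U) * (U_C gamma mu - U))))
         (at U)"
proof -
  have "1 / mu / (-U) - (1 / mu - 1) / (U_C gamma mu - U)
          = (U_C gamma mu - mu * U) / (mu * (-U) * (U_C gamma mu - U))"
    using assms U_C_pos mu_pos by (simp add: field_simps)
  moreover have "(Usp_implicit gamma mu K has_real_derivative
      Usp_implicit gamma mu K U * (1 / mu / (-U) - (1 / mu - 1) / (U_C gamma mu - U))) (at U)"
    unfolding Usp_implicit_def[abs_def]
    by (rule has_real_derivative_powr_quotient) (use assms U_C_pos in auto)
  ultimately show ?thesis
    by simp
qed

lemma Usp_implicit_strict_mono: "strict_mono_on {..<0} (Usp_implicit gamma mu K)"
proof (rule strict_mono_onI)
  fix U1 U2 :: real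
  assume "U1 \<in> {..<0}" "U2 \<in> {..<0}" "U1 < U2"
  then show "Usp_implicit gamma mu K U1 < Usp_implicit gamma mu K U2"
  proof (intro DERIV_pos_imp_increasing[OF \<open>U1 < U2\<close>] exI conjI)
    fix U
    assume "U1 \<le> U" "U \<le> U2"
    with \<open>U2 \<in> {..<0}\<close> have "U < 0"
      by simp
    then show "DERIV (Usp_implicit gamma mu K) U :> Usp_implicit gamma mu K U *
      ((U_C gamma mu - mu * U) / (mu * (-U) * (U_C gamma mu - U)))"
      by (rule Usp_implicit_has_real_derivative)
    show "0 < Usp_implicit gamma mu K U *
      ((U_C gamma mu - mu * U) / (mu * (-U) * (U_C gamma mu - U)))"
      using Usp_implicit_pos[OF \<open>U < 0\<close>] Usp_implicit_log_deriv_pos[OF \<open>U < 0\<close>]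
      by (rule mult_pos_pos)
  qed
qed

lemma continuous_on_Usp_implicit: "continuous_on {..<0} (Usp_implicit gamma mu K)"
  using Usp_implicit_has_real_derivative
  by (intro continuous_at_imp_continuous_on ballI DERIV_isCont) fastforce

lemma Usp_implicit_tendsto_at_bot: "(Usp_implicit gamma mu K \<longlongrightarrow> 0) at_bot"
  unfolding Usp_implicit_def[abs_def] using U_C_pos K_pos mu_pos mu_le_1 by real_asymp

lemma Usp_implicit_at_left_0: "filterlim (Usp_implicit gamma mu K) at_top (at_left 0)"
  unfolding Usp_implicit_def[abs_def] using U_C_pos K_pos mu_pos mu_le_1 by real_asymp

lemma Usp_implicit_mult_tendsto_at_bot:
  "((\<lambda>U. Usp_implicit gamma mu K U * (-U)) \<longlongrightarrow> K) at_bot"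
  unfolding Usp_implicit_def using U_C_pos K_pos mu_pos mu_le_1 by real_asymp

lemma Usp_implicit_powr_mult_tendsto_at_left_0:
  "((\<lambda>U. Usp_implicit gamma mu K U powr mu * (-U)) \<longlongrightarrow> K powr mu * U_C gamma mu powr (1 - mu))
     (at_left 0)"
proof -
  have "((\<lambda>U. Usp_implicit gamma mu K U powr mu * (-U)) \<longlongrightarrow>
          (K * U_C gamma mu powr (1 / mu - 1)) powr mu) (at_left 0)"
    unfolding Usp_implicit_def using U_C_pos K_pos mu_pos mu_le_1 by real_asymp
  moreover have "(1 / mu - 1) * mu = 1 - mu"
    using mu_pos by (simp add: field_simps)
  ultimately show ?thesis
    using U_C_pos K_pos by (simp add: powr_mult powr_powr)
qed

lemma Usp_implicit_ex1: "0 < y \<Longrightarrow> \<exists>!U. U < 0 \<and> y = Usp_implicit gamma mu K U"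
  by (rule ex1_neg_preimage[OF Usp_implicit_strict_mono continuous_on_Usp_implicit
        Usp_implicit_tendsto_at_bot Usp_implicit_at_left_0])

lemma Usp_spec:
  assumes "0 < y"
  shows "Usp gamma mu K y < 0 \<and> Usp_implicit gamma mu K (Usp gamma mu K y) = y"
  using theI'[OF Usp_implicit_ex1[OF assms]] by (simp add: Usp_def)

lemma Usp_Usp_implicit: "U < 0 \<Longrightarrow> Usp gamma mu K (Usp_implicit gamma mu K U) = U"
  using Usp_spec[OF Usp_implicit_pos] strict_mono_on_imp_inj_on[OF Usp_implicit_strict_mono]
  by (auto dest: inj_onD)

lemma U_C_ratio_eq_ode_rhs:
  assumes "U < 0"
  shows "mu * (-U) * (U_C gamma mu - U) / (U_C gamma mu - mu * U)
           = - (((gamma + 1) * U - 2 * mu) * U) / ((gamma + 1) * U - 2)"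
proof -
  have "(gamma + 1) * U < 0"
    using assms gamma_gt by (simp add: mult_pos_neg)
  then have "(gamma + 1) * U - 2 \<noteq> 0"
    by simp
  have "U_C gamma mu * (gamma + 1) = 2 * mu"
    using gamma_gt by (simp add: U_C_def)
  then have "mu * (-U) * (U_C gamma mu - U) * ((gamma + 1) * U - 2)
               = - (((gamma + 1) * U - 2 * mu) * U) * (U_C gamma mu - mu * U)"
    by algebra
  moreover have "U_C gamma mu - mu * U \<noteq> 0"
    using U_C_minus_mult_pos[OF assms] by simp
  ultimately show ?thesis
    using frac_eq_eq \<open>(gamma + 1) * U - 2 \<noteq> 0\<close> by blast
qed

lemma Usp_has_real_derivative:
  assumes "0 < y"
  defines "U \<equiv> Usp gamma mu K y"
  shows "(Usp gamma mu K has_real_derivative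
           - (((gamma + 1) * U - 2 * mu) * U) / (y * ((gamma + 1) * U - 2))) (at y)"
proof -
  have U: "U < 0" "Usp_implicit gamma mu K U = y"
    using Usp_spec[OF assms(1)] by (simp_all add: U_def)
  define D where
    "D = Usp_implicit gamma mu K U * ((U_C gamma mu - mu * U) / (mu * (-U) * (U_C gamma mu - U)))"
  have "0 < D"
    unfolding D_def using Usp_implicit_pos[OF \<open>U < 0\<close>] Usp_implicit_log_deriv_pos[OF \<open>U < 0\<close>]
    by (rule mult_pos_pos)
  then have "D \<noteq> 0"
    by simp
  moreover have "(Usp_implicit gamma mu K has_real_derivative D) (at (Usp gamma mu K y))"
    unfolding D_def U_def by (rule Usp_implicit_has_real_derivative[OF U(1)[unfolded U_def]])
  ultimately have deriv: "(Usp gamma mu K has_real_derivative inverse D) (at y)"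
    using has_field_derivative_inverse_strong_x[OF _ _ open_lessThan continuous_on_Usp_implicit]
      Usp_Usp_implicit U
    by (simp add: U_def)
  have "inverse D = mu * (-U) * (U_C gamma mu - U) / (U_C gamma mu - mu * U) / y"
    using U by (simp add: D_def)
  also have "\<dots> = - (((gamma + 1) * U - 2 * mu) * U) / ((gamma + 1) * U - 2) / y"
    by (simp only: U_C_ratio_eq_ode_rhs[OF \<open>U < 0\<close>])
  also have "\<dots> = - (((gamma + 1) * U - 2 * mu) * U) / (y * ((gamma + 1) * U - 2))"
    by (metis divide_divide_eq_left mult.commute)
  finally show ?thesis
    using deriv by simp
qed

lemma Usp_at_left_0_at_top: "filterlim (Usp gamma mu K) (at_left 0) at_top"
  using Usp_implicit_strict_mono Usp_spec by (rule filterlim_inverse_at_top_at_left_0)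

lemma Usp_at_bot_at_right_0: "filterlim (Usp gamma mu K) at_bot (at_right 0)"
  using Usp_implicit_strict_mono Usp_implicit_pos Usp_spec
  by (rule filterlim_inverse_at_right_0_at_bot)

lemma Usp_asymptotics_at_top:
  "(\<lambda>y. Usp gamma mu K y - (- (K powr mu * U_C gamma mu powr (1 - mu) / y powr mu)))
     \<in> o[at_top](\<lambda>y. 1 / y powr mu)"
proof -
  let ?A = "K powr mu * U_C gamma mu powr (1 - mu)"
  have "((\<lambda>y. - (Usp_implicit gamma mu K (Usp gamma mu K y) powr mu * (- Usp gamma mu K y)))
          \<longlongrightarrow> - ?A) at_top"
    using filterlim_compose[OF Usp_implicit_powr_mult_tendsto_at_left_0 Usp_at_left_0_at_top]
    by (rule tendsto_minus)
  moreover have "eventually (\<lambda>y. - (Usp_implicit gamma mu K (Usp gamma mu K y) powr mu *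
      (- Usp gamma mu K y)) = y powr mu * Usp gamma mu K y) at_top"
    using eventually_gt_at_top[of 0] by eventually_elim (simp add: Usp_spec)
  ultimately have "((\<lambda>y. y powr mu * Usp gamma mu K y) \<longlongrightarrow> - ?A) at_top"
    by (rule Lim_transform_eventually)
  then have "(\<lambda>y. Usp gamma mu K y - - ?A / y powr mu) \<in> o[at_top](\<lambda>y. 1 / y powr mu)"
    by (rule smallo_of_tendsto_mult) (use eventually_gt_at_top[of 0] in eventually_elim, simp)
  then show ?thesis
    by simp
qed

lemma Usp_asymptotics_at_right_0:
  "(\<lambda>y. Usp gamma mu K y - (- K / y)) \<in> o[at_right 0](\<lambda>y. 1 / y)"
proof -
  have "((\<lambda>y. - (Usp_implicit gamma mu K (Usp gamma mu K y) * (- Usp gamma mu K y)))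
          \<longlongrightarrow> - K) (at_right 0)"
    using filterlim_compose[OF Usp_implicit_mult_tendsto_at_bot Usp_at_bot_at_right_0]
    by (rule tendsto_minus)
  moreover have "eventually (\<lambda>y. - (Usp_implicit gamma mu K (Usp gamma mu K y) *
      (- Usp gamma mu K y)) = y * Usp gamma mu K y) (at_right 0)"
    using eventually_at_right_real[OF zero_less_one] by eventually_elim (simp add: Usp_spec)
  ultimately have "((\<lambda>y. y * Usp gamma mu K y) \<longlongrightarrow> - K) (at_right 0)"
    by (rule Lim_transform_eventually)
  then show ?thesis
    by (rule smallo_of_tendsto_mult)
       (use eventually_at_right_real[OF zero_less_one] in eventually_elim, simp)
qed

end

theorem lemma3p6:
  fixes gamma mu K :: real
  assumes "1 < gamma" "gamma < 3" "0 < mu" "mu < 1" "0 < K"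
  shows "(\<forall>y>0. \<exists>!U. U < 0 \<and> y = Usp_implicit gamma mu K U)
    \<and> (\<forall>y>0. \<exists>D. (Usp gamma mu K has_real_derivative D) (at y) \<and>
          y * D = - (((gamma + 1) * Usp gamma mu K y - 2 * mu) * Usp gamma mu K y)
                    / ((gamma + 1) * Usp gamma mu K y - 2))
    \<and> (\<forall>y>0. Usp gamma mu K y < 0)
    \<and> (Usp gamma mu K \<longlongrightarrow> 0) at_top
    \<and> (\<lambda>y. Usp gamma mu K y - (- ((K powr mu) * ((U_C gamma mu) powr (1 - mu)) / (y powr mu))))
         \<in> o[at_top](\<lambda>y. 1 / y powr mu)
    \<and> (\<lambda>y. Usp gamma mu K y - (- K / y)) \<in> o[at_right 0](\<lambda>y. 1 / y)"
proof -
  interpret Usp_parameters gamma mu K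
    using assms by unfold_locales auto
  have ode: "\<exists>D. (Usp gamma mu K has_real_derivative D) (at y) \<and>
      y * D = - (((gamma + 1) * Usp gamma mu K y - 2 * mu) * Usp gamma mu K y)
                / ((gamma + 1) * Usp gamma mu K y - 2)" if "0 < y" for y
    using Usp_has_real_derivative[OF that] that by (intro exI conjI) auto
  have "(Usp gamma mu K \<longlongrightarrow> 0) at_top"
    using Usp_at_left_0_at_top by (simp add: filterlim_at)
  then show ?thesis
    using Usp_implicit_ex1 ode Usp_spec Usp_asymptotics_at_top Usp_asymptotics_at_right_0
    by blast
qed

end
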